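(* Let $c>0$ and $\Omega_0=\{(u,v,A): 0\le A\le 1;\ u,v\ge 0;\ uv\le 1\}$. There is no twice differentiable function $B_0$ on $\Omega_0$ such that $-d^2B_0\ge 0$ (nonpositive definite Hessian), $\frac{\partial B_0}{\partial A}\ge c\,u^2v$, and $0\le B_0\le u$ on $\Omega_0$. *)

theory Defs
  imports "HOL-Analysis.Analysis"
begin

definition Omega0 :: "(real \<times> real \<times> real) set" where
  "Omega0 = {(u, v, A). 0 \<le> A \<and> A \<le> 1 \<and> 0 \<le> u \<and> 0 \<le> v \<and> u * v \<le> 1}"

end

theory Submission imports Defs begin

text \<open>A nonpositive Hessian puts B below its tangent planes along every segment inside
  \<open>Omega0\<close>. Since \<open>0 \<le> B \<le> u\<close>, B vanishes on the face \<open>u = 0\<close>, so at the origin only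
  \<open>a = \<partial>B/\<partial>u\<close> survives and the tangent plane there gives \<open>B(u, 1/u, 1) \<le> a u\<close>. Going down
  in A from \<open>(u, 1/u, 1)\<close>, where \<open>\<partial>B/\<partial>A \<ge> c u\<^sup>2 (1/u) = c u\<close>, yields \<open>B(u, 1/u, 0) \<le> (a - c) u\<close>.
  Finally \<open>(u, 1/u, 0)\<close> is the midpoint of \<open>(2u, 0, 0)\<close> and \<open>(0, 2/u, 0)\<close>, joined to both
  inside \<open>Omega0\<close>, so concavity and \<open>B \<ge> 0\<close> give \<open>B(2u, 0, 0) \<le> 2 (a - c) u\<close>. Letting
  \<open>u \<rightarrow> 0\<close> shows that the u-derivative at the origin is at most \<open>a - c < a\<close>.\<close>

lemma f''_le0_imp_le_tangent:
  fixes f f' f'' :: "real \<Rightarrow> real"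
  assumes "a \<le> b"
    and f': "\<And>t. t \<in> {a..b} \<Longrightarrow> (f has_real_derivative f' t) (at t within {a..b})"
    and f'': "\<And>t. t \<in> {a..b} \<Longrightarrow> (f' has_real_derivative f'' t) (at t within {a..b})"
    and nonpos: "\<And>t. t \<in> {a..b} \<Longrightarrow> f'' t \<le> 0"
  shows "f b \<le> f a + (b - a) * f' a"
proof -
  have interior_deriv: "(g has_real_derivative g' x) (at x)"
    if "\<And>t. t \<in> {a..b} \<Longrightarrow> (g has_real_derivative g' t) (at t within {a..b})" "a < x" "x < b"
    for g g' :: "real \<Rightarrow> real" and x
  proof -
    have "(g has_real_derivative g' x) (at x within {a..b})" using that by auto
    then show ?thesis using at_within_Icc_at[of a x b] that by simp
  qed
  have f'_cont: "continuous_on {a..b} f'" and f_cont: "continuous_on {a..b} f"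
    using f' f'' DERIV_continuous continuous_on_eq_continuous_within by blast+
  have f'_antitone: "f' t \<le> f' a" if "a \<le> t" "t \<le> b" for t
  proof (rule DERIV_nonpos_imp_decreasing_open[OF that(1)])
    show "\<exists>y. (f' has_real_derivative y) (at x) \<and> y \<le> 0" if "a < x" "x < t" for x
      using interior_deriv[OF f''] nonpos that \<open>t \<le> b\<close> by fastforce
    show "continuous_on {a..t} f'"
      using f'_cont continuous_on_subset that by fastforce
  qed
  have "f b - b * f' a \<le> f a - a * f' a"
  proof (rule DERIV_nonpos_imp_decreasing_open[OF \<open>a \<le> b\<close>])
    show "\<exists>y. ((\<lambda>t. f t - t * f' a) has_real_derivative y) (at x) \<and> y \<le> 0"
      if "a < x" "x < b" for x
      using interior_deriv[OF f' that] f'_antitone[of x] that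
      by (auto intro!: derivative_eq_intros exI[of _ "f' x - f' a"])
    show "continuous_on {a..b} (\<lambda>t. f t - t * f' a)"
      by (intro continuous_intros f_cont)
  qed
  then show ?thesis by (simp add: algebra_simps)
qed

lemma has_derivative_along_segment:
  assumes f: "(f has_derivative f') (at (p + t *\<^sub>R d) within S)"
    and segment: "\<And>s. s \<in> {0..1} \<Longrightarrow> p + s *\<^sub>R d \<in> S"
  shows "((\<lambda>s. f (p + s *\<^sub>R d)) has_derivative (\<lambda>h. f' (h *\<^sub>R d))) (at t within {0..1})"
proof -
  have line: "((\<lambda>s. p + s *\<^sub>R d) has_derivative (\<lambda>h. h *\<^sub>R d)) (at t within {0..1})"
    by (auto intro!: derivative_eq_intros)
  have "(\<lambda>s. p + s *\<^sub>R d) ` {0..1} \<subseteq> S" using segment by auto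
  then show ?thesis
    by (rule has_derivative_in_compose[OF line has_derivative_subset[OF f]])
qed

lemma has_derivative_zero_along_constant_segment:
  fixes f :: "'a::real_normed_vector \<Rightarrow> 'b::real_normed_vector"
  assumes f: "(f has_derivative f') (at p within S)"
    and segment: "\<And>s. s \<in> {0..1} \<Longrightarrow> p + s *\<^sub>R d \<in> S"
    and const: "\<And>s. s \<in> {0..1} \<Longrightarrow> f (p + s *\<^sub>R d) = f p"
  shows "f' d = 0"
proof -
  interpret bounded_linear f' using f by (rule has_derivative_bounded_linear)
  have "((\<lambda>s. f (p + s *\<^sub>R d)) has_vector_derivative f' d) (at 0 within {0..1})"
    using has_derivative_along_segment[of f f' p 0 d S] f segment
    by (simp add: has_vector_derivative_def scaleR)
  moreover have "((\<lambda>s. f (p + s *\<^sub>R d)) has_vector_derivative 0) (at 0 within {0..1})"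
    by (rule has_vector_derivative_transform_within[where f = "\<lambda>_. f p" and d = 1])
       (auto simp: const)
  ultimately show ?thesis
    using vector_derivative_unique_within_closed_interval[of 0 1 0] by auto
qed

lemma has_real_derivative_le_of_secant_le:
  fixes f :: "real \<Rightarrow> real"
  assumes "a < b"
    and f: "(f has_real_derivative D) (at a within {a..b})"
    and secant: "\<And>t. a < t \<Longrightarrow> t \<le> b \<Longrightarrow> f t \<le> f a + (t - a) * M"
  shows "D \<le> M"
proof (rule tendsto_upperbound)
  show "((\<lambda>t. (f t - f a) / (t - a)) \<longlongrightarrow> D) (at a within {a..b})"
    using f by (simp add: has_field_derivative_iff)
  have "(f t - f a) / (t - a) \<le> M" if "t \<noteq> a" "t \<in> {a..b}" for t
  proof -
    have "a < t" "t \<le> b" using that by auto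
    with secant[OF this] show ?thesis by (simp add: divide_le_eq mult.commute)
  qed
  then show "\<forall>\<^sub>F t in at a within {a..b}. (f t - f a) / (t - a) \<le> M"
    unfolding eventually_at_filter by (auto intro: always_eventually)
  show "at a within {a..b} \<noteq> bot"
    using \<open>a < b\<close> by (simp add: at_within_Icc_at_right)
qed

lemma le_tangent_of_hessian_nonpos:
  fixes B :: "'a::real_normed_vector \<Rightarrow> real" and DB :: "'a \<Rightarrow> 'a \<Rightarrow>\<^sub>L real"
    and D2B :: "'a \<Rightarrow> 'a \<Rightarrow>\<^sub>L ('a \<Rightarrow>\<^sub>L real)"
  assumes segment: "\<And>t. t \<in> {0..1} \<Longrightarrow> p + t *\<^sub>R d \<in> S"
    and B: "\<And>x. x \<in> S \<Longrightarrow> (B has_derivative blinfun_apply (DB x)) (at x within S)"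
    and DB: "\<And>x. x \<in> S \<Longrightarrow> (DB has_derivative blinfun_apply (D2B x)) (at x within S)"
    and hessian: "\<And>x. x \<in> S \<Longrightarrow> D2B x d d \<le> 0"
  shows "B (p + d) \<le> B p + DB p d"
proof -
  let ?x = "\<lambda>t. p + t *\<^sub>R d"
  have B_line: "((\<lambda>t. B (?x t)) has_real_derivative DB (?x t) d) (at t within {0..1})"
    if "t \<in> {0..1}" for t
    using has_derivative_along_segment[OF B[OF segment[OF that]] segment]
    by (simp add: has_field_derivative_def blinfun.scaleR_right mult.commute[of _ "DB (?x t) d"])
  have DB_line: "((\<lambda>t. DB (?x t) d) has_real_derivative D2B (?x t) d d) (at t within {0..1})"
    if "t \<in> {0..1}" for t
    using bounded_linear.has_derivative[OF blinfun.bounded_linear_left[where b = d]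
        has_derivative_along_segment[OF DB[OF segment[OF that]] segment]]
    by (simp add: has_field_derivative_def blinfun.scaleR_right blinfun.scaleR_left
        mult.commute[of _ "D2B (?x t) d d"])
  have "B (?x 1) \<le> B (?x 0) + (1 - 0) * DB (?x 0) d"
    by (rule f''_le0_imp_le_tangent[OF zero_le_one B_line DB_line hessian[OF segment]])
  then show ?thesis by simp
qed

locale bellman_candidate =
  fixes c :: real and B :: "real \<times> real \<times> real \<Rightarrow> real"
    and DB :: "real \<times> real \<times> real \<Rightarrow> (real \<times> real \<times> real) \<Rightarrow>\<^sub>L real"
    and D2B :: "real \<times> real \<times> real \<Rightarrow> (real \<times> real \<times> real) \<Rightarrow>\<^sub>L ((real \<times> real \<times> real) \<Rightarrow>\<^sub>L real)"
  assumes c_pos: "c > 0"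
    and derivatives: "\<forall>p\<in>Omega0. (B has_derivative blinfun_apply (DB p)) (at p within Omega0)
                \<and> (DB has_derivative blinfun_apply (D2B p)) (at p within Omega0)"
    and hessian_nonpos: "\<forall>p\<in>Omega0. \<forall>h. blinfun_apply (blinfun_apply (D2B p) h) h \<le> 0"
    and bounds: "\<forall>u v A. (u, v, A) \<in> Omega0 \<longrightarrow>
          blinfun_apply (DB (u, v, A)) (0, 0, 1) \<ge> c * u\<^sup>2 * v
        \<and> 0 \<le> B (u, v, A) \<and> B (u, v, A) \<le> u"
begin

lemma B_has_derivative: "p \<in> Omega0 \<Longrightarrow> (B has_derivative DB p) (at p within Omega0)"
  using derivatives by blast

lemma DB_has_derivative: "p \<in> Omega0 \<Longrightarrow> (DB has_derivative D2B p) (at p within Omega0)"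
  using derivatives by blast

lemma B_le_tangent:
  assumes "\<And>t. t \<in> {0..1} \<Longrightarrow> p + t *\<^sub>R d \<in> Omega0"
  shows "B (p + d) \<le> B p + DB p d"
  using le_tangent_of_hessian_nonpos[OF assms B_has_derivative DB_has_derivative] hessian_nonpos
  by blast

lemma B_eq_0_if_u_eq_0: "(0, v, A) \<in> Omega0 \<Longrightarrow> B (0, v, A) = 0"
  using bounds by force

lemma DB_0_v_A_directions:
  shows "DB 0 (0, 1, 0) = 0" and "DB 0 (0, 0, 1) = 0"
  by (rule has_derivative_zero_along_constant_segment[OF B_has_derivative];
      simp add: Omega0_def zero_prod_def B_eq_0_if_u_eq_0)+

lemma B_decrease_in_A:
  assumes "0 < u"
  shows "B (u, 1/u, 0) \<le> B (u, 1/u, 1) - c * u"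
proof -
  have "B ((u, 1/u, 1) + (0, 0, -1)) \<le> B (u, 1/u, 1) + DB (u, 1/u, 1) (0, 0, -1)"
    by (rule B_le_tangent) (use assms in \<open>auto simp: Omega0_def\<close>)
  moreover have "DB (u, 1/u, 1) (0, 0, -1) = - DB (u, 1/u, 1) (0, 0, 1)"
    using blinfun.minus_right[of "DB (u, 1/u, 1)" "(0, 0, 1)"] by simp
  moreover have "c * u\<^sup>2 * (1/u) \<le> DB (u, 1/u, 1) (0, 0, 1)"
    using bounds[rule_format, of u "1/u" 1] assms by (simp add: Omega0_def)
  moreover have "c * u\<^sup>2 * (1/u) = c * u"
    using assms by (simp add: power2_eq_square)
  ultimately show ?thesis by simp
qed

lemma B_hyperbola_top_le:
  assumes "0 < u"
  shows "B (u, 1/u, 1) \<le> u * DB 0 (1, 0, 0)"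
proof -
  have "B (0 + (u, 1/u, 1)) \<le> B 0 + DB 0 (u, 1/u, 1)"
  proof (rule B_le_tangent)
    fix t :: real assume t: "t \<in> {0..1}"
    have "t * u * (t * (1/u)) = t * t" using assms by simp
    also have "\<dots> \<le> 1" using t by (simp add: mult_le_one)
    finally show "0 + t *\<^sub>R (u, 1/u, 1) \<in> Omega0" using t assms by (simp add: Omega0_def)
  qed
  moreover have "(u, 1/u, 1::real) = u *\<^sub>R (1, 0, 0) + (1/u) *\<^sub>R (0, 1, 0) + (0, 0, 1)" by simp
  then have "DB 0 (u, 1/u, 1) = u * DB 0 (1, 0, 0)"
    by (simp only: blinfun.add_right blinfun.scaleR_right DB_0_v_A_directions) simp
  moreover have "B 0 = 0"
    using B_eq_0_if_u_eq_0[of 0 0] by (simp add: Omega0_def zero_prod_def)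
  ultimately show ?thesis by simp
qed

text \<open>Both segments from \<open>(u, 1/u, 0)\<close> stay in \<open>Omega0\<close>: along them \<open>u v = 1 - t\<^sup>2\<close>.\<close>

lemma B_u_axis_le_hyperbola:
  assumes "0 < u"
  shows "B (2 * u, 0, 0) \<le> 2 * B (u, 1/u, 0)"
proof -
  let ?p = "(u, 1/u, 0::real)" and ?d = "(u, -1/u, 0::real)"
  have segment_prod: "(u + t * u) * (1/u - t * (1/u)) = 1 - t * t" for t
    using assms by (simp add: field_simps)
  have "B (?p + ?d) \<le> B ?p + DB ?p ?d"
  proof (rule B_le_tangent)
    fix t :: real assume t: "t \<in> {0..1}"
    have "0 \<le> 1/u - t * (1/u)" using t assms by (simp add: field_simps)
    then show "?p + t *\<^sub>R ?d \<in> Omega0"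
      using t assms segment_prod[of t] by (simp add: Omega0_def)
  qed
  moreover have "B (?p + (- ?d)) \<le> B ?p - DB ?p ?d"
  proof -
    have "B (?p + (- ?d)) \<le> B ?p + DB ?p (- ?d)"
    proof (rule B_le_tangent)
      fix t :: real assume t: "t \<in> {0..1}"
      have "(u - t * u) * (1/u + t * (1/u)) = 1 - t * t"
        using assms by (simp add: field_simps)
      then show "?p + t *\<^sub>R (- ?d) \<in> Omega0"
        using t assms by (simp add: Omega0_def mult_le_one)
    qed
    then show ?thesis by (simp only: blinfun.minus_right diff_conv_add_uminus)
  qed
  moreover have "0 \<le> B (0, 2/u, 0)"
    using bounds assms by (auto simp: Omega0_def)
  ultimately show ?thesis by simp
qed

lemma B_u_axis_le:
  assumes "0 < t"
  shows "B (t, 0, 0) \<le> t * (DB 0 (1, 0, 0) - c)"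
proof -
  have "B (t, 0, 0) \<le> 2 * B (t/2, 2/t, 0)"
    using B_u_axis_le_hyperbola[of "t/2"] assms by simp
  also have "\<dots> \<le> 2 * (B (t/2, 2/t, 1) - c * (t/2))"
    using B_decrease_in_A[of "t/2"] assms by simp
  also have "\<dots> \<le> 2 * ((t/2) * DB 0 (1, 0, 0) - c * (t/2))"
    using B_hyperbola_top_le[of "t/2"] assms by simp
  finally show ?thesis by (simp add: algebra_simps)
qed

lemma B_u_axis_has_derivative:
  "((\<lambda>t. B (t, 0, 0)) has_real_derivative DB 0 (1, 0, 0)) (at 0 within {0..1})"
proof -
  let ?d = "(1, 0, 0) :: real \<times> real \<times> real"
  have segment: "0 + t *\<^sub>R ?d \<in> Omega0" if "t \<in> {0..1}" for t
    using that by (simp add: Omega0_def)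
  from has_derivative_along_segment[OF B_has_derivative[OF segment[of 0]] segment]
  show ?thesis
    unfolding blinfun.scaleR_right
    by (simp add: has_field_derivative_def zero_prod_def mult.commute[of _ "DB (0, 0, 0) ?d"])
qed

lemma inconsistent: False
proof -
  have "DB 0 (1, 0, 0) \<le> DB 0 (1, 0, 0) - c"
  proof (rule has_real_derivative_le_of_secant_le[OF zero_less_one B_u_axis_has_derivative])
    fix t :: real assume "0 < t" "t \<le> 1"
    then show "B (t, 0, 0) \<le> B (0, 0, 0) + (t - 0) * (DB 0 (1, 0, 0) - c)"
      using B_u_axis_le B_eq_0_if_u_eq_0[of 0 0] by (simp add: Omega0_def)
  qed
  with c_pos show False by simp
qed

end

theorem mainTheorem7:
  fixes c :: real
  assumes "c > 0"
  shows "\<not> (\<exists>(B :: real \<times> real \<times> real \<Rightarrow> real) DB D2B.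
     (\<forall>p\<in>Omega0. (B has_derivative blinfun_apply (DB p)) (at p within Omega0)
                \<and> (DB has_derivative blinfun_apply (D2B p)) (at p within Omega0))
   \<and> (\<forall>p\<in>Omega0. \<forall>h. blinfun_apply (blinfun_apply (D2B p) h) h \<le> 0)
   \<and> (\<forall>u v A. (u, v, A) \<in> Omega0 \<longrightarrow>
          blinfun_apply (DB (u, v, A)) (0, 0, 1) \<ge> c * u\<^sup>2 * v
        \<and> 0 \<le> B (u, v, A) \<and> B (u, v, A) \<le> u))"
  using assms bellman_candidate.inconsistent unfolding bellman_candidate_def by blast

end
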